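(* Let $N,m,d$ be natural numbers with $d\geqslant m+1$, and let $c,C,\varepsilon$ be positive constants. Let $L:\mathbb{R}^d\to\mathbb{R}^m$ be a surjective linear map with $\Vert L\Vert_\infty\leqslant C$ and $\operatorname{dist}(L,V_{\mathrm{rank}}(m,d))\geqslant c$. Let $F:\mathbb{R}^d\to[0,1]$ be supported on $[-N,N]^d$ and $G:\mathbb{R}^m\to[0,1]$ supported on $[-\varepsilon,\varepsilon]^m$. Then $T^L_{F,G,N}(1,\dots,1)\ll_{c,C,\varepsilon}\Vert G\Vert_\infty$.
   Context: Matrices identified with linear maps; $\Vert L\Vert_\infty$ max absolute entry; $\operatorname{dist}$ is $\ell^\infty$ distance on entries; $V_{\mathrm{rank}}(m,d)$ is the set of $m\times d$ real matrices of rank $<m$; $\Vert G\Vert_\infty=\sup|G|$. $T^L_{F,G,N}(1,\dots,1)=N^{-(d-m)}\sum_{\mathbf n\in\mathbb{Z}^d}F(\mathbf n)G(L\mathbf n)$. Implied constants depend on $c,C,\varepsilon,m,d$. *)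

theory Defs
  imports "HOL-Analysis.Analysis"
begin

definition mat_sup_norm :: "real^'d^'m \<Rightarrow> real" where
  "mat_sup_norm A = Max {\<bar>A $ i $ j\<bar> | i j. True}"

definition dist_lowrank :: "real^'d^'m \<Rightarrow> real" where
  "dist_lowrank A = Inf {mat_sup_norm (A - M) | M. rank M < CARD('m)}"

definition lattice :: "(real^'d) set" where
  "lattice = {n. \<forall>i. n $ i \<in> \<int>}"

definition T_form :: "real^'d^'m \<Rightarrow> (real^'d \<Rightarrow> real) \<Rightarrow> (real^'m \<Rightarrow> real) \<Rightarrow> nat \<Rightarrow> real" where
  "T_form L F G N = real N powr (- (real CARD('d) - real CARD('m)))
     * (\<Sum>\<^sub>\<infinity>n\<in>lattice. F n * G (L *v n))"

end

theory Submission
  imports Defs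
begin

text \<open>A bounded matrix at entrywise distance at least c from the matrices of rank < m ranges over
  a compact set of full-rank matrices, so one of its m \<times> m column minors has determinant at
  least some \<delta>(c, C) > 0 in absolute value. Two lattice points of [-N, N]^d whose images under L
  lie in [-\<epsilon>, \<epsilon>]^m and which agree outside the columns of that minor differ by an integer
  vector z supported on those columns with |L z| \<le> 2\<epsilon>; by Cramer's rule z is bounded in terms
  of C, \<epsilon> and \<delta>. So there are O(N^(d-m)) such lattice points, each contributing at most
  sup |G| to the sum.\<close>

lemma finite_abs_entries: "finite {\<bar>A $ i $ j\<bar> | i j. True}" for A :: "real^'d^'m"
proof -
  have "{\<bar>A $ i $ j\<bar> | i j. True} = (\<lambda>(i,j). \<bar>A $ i $ j\<bar>) ` UNIV" by auto
  then show ?thesis by simp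
qed

lemma abs_entry_le_mat_sup_norm: "\<bar>A $ i $ j\<bar> \<le> mat_sup_norm A" for A :: "real^'d^'m"
  unfolding mat_sup_norm_def by (rule Max_ge[OF finite_abs_entries]) blast

lemma mat_sup_norm_nonneg: "0 \<le> mat_sup_norm A" for A :: "real^'d^'m"
  using abs_entry_le_mat_sup_norm[of A] abs_ge_zero order_trans by blast

lemma mat_sup_norm_le_norm: "mat_sup_norm A \<le> norm A" for A :: "real^'d^'m"
proof -
  have "\<bar>A $ i $ j\<bar> \<le> norm A" for i j
    using Finite_Cartesian_Product.norm_nth_le[of "A $ i" j]
      Finite_Cartesian_Product.norm_nth_le[of A i] by simp
  then show ?thesis
    unfolding mat_sup_norm_def using Max_le_iff[OF finite_abs_entries] by blast
qed

lemma dist_lowrank_le_mat_sup_norm: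
  fixes A M :: "real^'d^'m"
  assumes "rank M < CARD('m)"
  shows "dist_lowrank A \<le> mat_sup_norm (A - M)"
  unfolding dist_lowrank_def
proof (rule cInf_lower)
  show "bdd_below {mat_sup_norm (A - M) |M. rank M < CARD('m)}"
    by (rule bdd_belowI[where m=0]) (auto simp: mat_sup_norm_nonneg)
qed (use assms in auto)

lemma norm_le_entry_bound:
  fixes A :: "real^'d^'m"
  assumes "\<And>i j. \<bar>A $ i $ j\<bar> \<le> C"
  shows "norm A \<le> real CARD('m) * (real CARD('d) * C)"
proof -
  have row: "norm (A $ i) \<le> real CARD('d) * C" for i
  proof -
    have "norm (A $ i) \<le> (\<Sum>j\<in>UNIV. norm (A $ i $ j))"
      unfolding norm_vec_def by (rule L2_set_le_sum) simp
    also have "\<dots> \<le> (\<Sum>j\<in>(UNIV::'d set). C)" by (rule sum_mono) (use assms in auto)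
    finally show ?thesis by simp
  qed
  have "norm A \<le> (\<Sum>i\<in>UNIV. norm (A $ i))"
    unfolding norm_vec_def by (rule L2_set_le_sum) simp
  also have "\<dots> \<le> (\<Sum>i\<in>(UNIV::'m set). real CARD('d) * C)" by (rule sum_mono) (use row in auto)
  finally show ?thesis by simp
qed

lemma abs_det_le_fact_mult_power:
  fixes B :: "real^'n^'n"
  assumes "\<And>i j. \<bar>B $ i $ j\<bar> \<le> M"
  shows "\<bar>det B\<bar> \<le> fact CARD('n) * M ^ CARD('n)"
proof -
  have "\<bar>det B\<bar> \<le> (\<Sum>p\<in>{p. p permutes (UNIV::'n set)}. \<bar>of_int (sign p) * (\<Prod>i\<in>UNIV. B $ i $ p i)\<bar>)"
    unfolding det_def by (rule sum_abs)
  also have "\<dots> \<le> (\<Sum>p\<in>{p. p permutes (UNIV::'n set)}. M ^ CARD('n))"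
  proof (rule sum_mono)
    fix p
    have "(\<Prod>i\<in>UNIV. \<bar>B $ i $ p i\<bar>) \<le> (\<Prod>i\<in>(UNIV::'n set). M)"
      by (rule prod_mono) (use assms in auto)
    then show "\<bar>of_int (sign p) * (\<Prod>i\<in>UNIV. B $ i $ p i)\<bar> \<le> M ^ CARD('n)"
      by (simp add: abs_mult abs_prod sign_def)
  qed
  also have "\<dots> = fact CARD('n) * M ^ CARD('n)"
    by (simp add: card_permutations)
  finally show ?thesis .
qed

lemma abs_coord_le_by_cramer:
  fixes A :: "real^'n^'n"
  assumes "\<delta> > 0" "\<delta> \<le> \<bar>det A\<bar>" and "\<And>i j. \<bar>A $ i $ j\<bar> \<le> C"
    and "\<And>i. \<bar>(A *v y) $ i\<bar> \<le> E"
  shows "\<bar>y $ k\<bar> \<le> fact CARD('n) * (max C E) ^ CARD('n) / \<delta>"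
proof -
  let ?A' = "(\<chi> i j. if j = k then (A *v y) $ i else A $ i $ j) :: real^'n^'n"
  have "\<bar>?A' $ i $ j\<bar> \<le> max C E" for i j
    using assms(3,4) by (auto simp: le_max_iff_disj)
  then have bound: "\<bar>det ?A'\<bar> \<le> fact CARD('n) * (max C E) ^ CARD('n)"
    by (rule abs_det_le_fact_mult_power)
  have "\<bar>y $ k\<bar> * \<delta> \<le> \<bar>y $ k\<bar> * \<bar>det A\<bar>" using assms(2) by (simp add: mult_left_mono)
  also have "\<dots> = \<bar>det ?A'\<bar>" by (simp add: cramer_lemma abs_mult)
  finally show ?thesis using bound assms(1) by (simp add: pos_le_divide_eq)
qed

definition column_submatrix :: "real^'d^'m \<Rightarrow> ('n \<Rightarrow> 'd) \<Rightarrow> real^'n^'m" where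
  "column_submatrix L \<sigma> = (\<chi> i j. L $ i $ \<sigma> j)"

lemma matrix_vector_mult_column_submatrix:
  fixes L :: "real^'d^'m" and \<sigma> :: "'n::finite \<Rightarrow> 'd"
  assumes "inj \<sigma>" and "\<And>i. i \<notin> range \<sigma> \<Longrightarrow> z $ i = 0"
  shows "L *v z = column_submatrix L \<sigma> *v (\<chi> j. z $ \<sigma> j)"
proof -
  have "(\<Sum>j\<in>UNIV. L$i$j * z$j) = (\<Sum>j\<in>UNIV. L$i$(\<sigma> j) * z$(\<sigma> j))" for i
  proof -
    have "(\<Sum>j\<in>UNIV. L$i$j * z$j) = (\<Sum>j\<in>range \<sigma>. L$i$j * z$j)"
      by (rule sum.mono_neutral_right) (simp_all add: assms(2))
    also have "\<dots> = (\<Sum>j\<in>UNIV. L$i$(\<sigma> j) * z$(\<sigma> j))"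
      using sum.reindex[OF assms(1), of "\<lambda>j. L$i$j * z$j"] by (simp add: o_def)
    finally show ?thesis .
  qed
  then show ?thesis by (simp add: vec_eq_iff matrix_vector_mult_def column_submatrix_def)
qed

lemma full_rank_imp_nonsingular_minor:
  fixes L :: "real^'d^'m"
  assumes "rank L = CARD('m)"
  obtains \<sigma> :: "'m \<Rightarrow> 'd" where "inj \<sigma>" "det (column_submatrix L \<sigma>) \<noteq> 0"
proof -
  have dim_cols: "dim (columns L) = CARD('m)" using assms column_rank_def by metis
  obtain B where B: "B \<subseteq> columns L" "independent B" "card B = dim (columns L)"
    by (rule basis_exists)
  have "columns L = (\<lambda>j. column j L) ` UNIV" unfolding columns_def by auto
  with B(1) obtain U where U: "inj_on (\<lambda>j. column j L) U" "B = (\<lambda>j. column j L) ` U"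
    using subset_image_inj by (metis subset_UNIV)
  have "card U = CARD('m)" using U B(3) dim_cols card_image by metis
  then obtain h where h: "bij_betw h (UNIV::'m set) U"
    using finite_same_card_bij[of "UNIV::'m set" U] by auto
  have "column j (column_submatrix L h) = column (h j) L" for j
    by (simp add: column_def column_submatrix_def)
  then have "columns (column_submatrix L h) = (\<lambda>j. column j L) ` range h"
    unfolding columns_def by auto
  then have "columns (column_submatrix L h) = B" using h U by (simp add: bij_betw_imp_surj_on)
  then have "rank (column_submatrix L h) = CARD('m)"
    using column_rank_def dim_eq_card_independent B(2,3) dim_cols by metis
  then have "det (column_submatrix L h) \<noteq> 0"
    using det_eq_0_rank[of "column_submatrix L h"] by simp
  with h show ?thesis using that bij_betw_imp_inj_on by blast
qed

lemma abs_coord_le_by_nonsingular_minor: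
  fixes L :: "real^'d^'m" and \<sigma> :: "'m \<Rightarrow> 'd"
  assumes "inj \<sigma>" "\<delta> > 0" "\<delta> \<le> \<bar>det (column_submatrix L \<sigma>)\<bar>" "\<And>i j. \<bar>L $ i $ j\<bar> \<le> C"
    and "\<And>i. i \<notin> range \<sigma> \<Longrightarrow> z $ i = 0" "\<And>i. \<bar>(L *v z) $ i\<bar> \<le> E"
  shows "\<bar>z $ k\<bar> \<le> fact CARD('m) * max C E ^ CARD('m) / \<delta>"
proof -
  have "\<bar>(\<chi> j. z $ \<sigma> j) $ j\<bar> \<le> fact CARD('m) * max C E ^ CARD('m) / \<delta>" for j
  proof (rule abs_coord_le_by_cramer[OF assms(2,3)])
    show "\<bar>column_submatrix L \<sigma> $ i $ j\<bar> \<le> C" for i j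
      using assms(4) by (simp add: column_submatrix_def)
    show "\<bar>(column_submatrix L \<sigma> *v (\<chi> j. z $ \<sigma> j)) $ i\<bar> \<le> E" for i
      using assms(6) matrix_vector_mult_column_submatrix[OF assms(1,5)] by metis
  qed
  moreover have "0 \<le> max C E"
    using assms(4) abs_ge_zero order_trans max.coboundedI1 by metis
  ultimately show ?thesis
    using assms(2,5) by (cases "k \<in> range \<sigma>") auto
qed

lemma tendsto_det_column_submatrix:
  fixes f :: "'a \<Rightarrow> real^'d^'m" and \<sigma> :: "'m \<Rightarrow> 'd"
  assumes "(f \<longlongrightarrow> l) F"
  shows "((\<lambda>x. det (column_submatrix (f x) \<sigma>)) \<longlongrightarrow> det (column_submatrix l \<sigma>)) F"
proof -
  have entries: "((\<lambda>x. f x $ i $ j) \<longlongrightarrow> l $ i $ j) F" for i j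
    using tendsto_vec_nth[OF tendsto_vec_nth[OF assms]] .
  show ?thesis
    unfolding det_def column_submatrix_def by (simp, intro tendsto_intros entries)
qed

lemma full_rank_of_limit:
  fixes L :: "nat \<Rightarrow> real^'d^'m"
  assumes "L \<longlonglongrightarrow> l" and "c > 0" and "\<And>k. c \<le> dist_lowrank (L k)"
  shows "rank l = CARD('m)"
proof (rule ccontr)
  assume "rank l \<noteq> CARD('m)"
  then have low: "rank l < CARD('m)" using rank_bound[of l] by linarith
  obtain k where "dist (L k) l < c"
    using metric_LIMSEQ_D[OF assms(1,2)] by blast
  moreover have "c \<le> dist (L k) l"
    using assms(3)[of k] dist_lowrank_le_mat_sup_norm[OF low, of "L k"]
      mat_sup_norm_le_norm[of "L k - l"]
    by (simp add: dist_norm)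
  ultimately show False by simp
qed

lemma uniform_nonsingular_minor:
  fixes c C :: real
  assumes "c > 0"
  obtains \<delta> where "\<delta> > 0"
    and "\<And>L::real^'d^'m. mat_sup_norm L \<le> C \<Longrightarrow> c \<le> dist_lowrank L \<Longrightarrow>
           \<exists>\<sigma>. inj \<sigma> \<and> \<delta> \<le> \<bar>det (column_submatrix L \<sigma>)\<bar>"
proof -
  have "\<exists>\<delta>>0. \<forall>L::real^'d^'m. mat_sup_norm L \<le> C \<and> c \<le> dist_lowrank L \<longrightarrow>
           (\<exists>\<sigma>. inj \<sigma> \<and> \<delta> \<le> \<bar>det (column_submatrix L \<sigma>)\<bar>)"
  proof (rule ccontr)
    assume "\<not> ?thesis"
    then have "\<forall>k::nat. \<exists>L::real^'d^'m. mat_sup_norm L \<le> C \<and> c \<le> dist_lowrank L \<and>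
        (\<forall>\<sigma>. inj \<sigma> \<longrightarrow> \<bar>det (column_submatrix L \<sigma>)\<bar> < inverse (real (Suc k)))"
      by (metis not_le of_nat_0_less_iff positive_imp_inverse_positive zero_less_Suc)
    from choice[OF this] obtain Ls :: "nat \<Rightarrow> real^'d^'m" where "\<forall>k. mat_sup_norm (Ls k) \<le> C
        \<and> c \<le> dist_lowrank (Ls k)
        \<and> (\<forall>\<sigma>. inj \<sigma> \<longrightarrow> \<bar>det (column_submatrix (Ls k) \<sigma>)\<bar> < inverse (real (Suc k)))"
      by blast
    then have Ls: "\<And>k. mat_sup_norm (Ls k) \<le> C" "\<And>k. c \<le> dist_lowrank (Ls k)"
      "\<And>k \<sigma>. inj \<sigma> \<Longrightarrow> \<bar>det (column_submatrix (Ls k) \<sigma>)\<bar> < inverse (real (Suc k))"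
      by auto
    have "bounded (range Ls)"
      unfolding bounded_iff
      using norm_le_entry_bound[of "Ls _" C] abs_entry_le_mat_sup_norm Ls(1) order_trans by blast
    then obtain l r where r: "strict_mono r" "(Ls \<circ> r) \<longlonglongrightarrow> l"
      using bounded_imp_convergent_subsequence by blast
    have "rank l = CARD('m)"
      by (rule full_rank_of_limit[OF r(2) assms]) (simp add: Ls(2))
    then obtain \<sigma> :: "'m \<Rightarrow> 'd" where \<sigma>: "inj \<sigma>" "det (column_submatrix l \<sigma>) \<noteq> 0"
      by (rule full_rank_imp_nonsingular_minor)
    have "(\<lambda>k. \<bar>det (column_submatrix (Ls (r k)) \<sigma>)\<bar>) \<longlonglongrightarrow> \<bar>det (column_submatrix l \<sigma>)\<bar>"
      using tendsto_rabs[OF tendsto_det_column_submatrix[OF r(2)]] by (simp add: o_def)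
    moreover have "\<bar>det (column_submatrix (Ls (r k)) \<sigma>)\<bar> \<le> inverse (real (Suc k))" for k
    proof -
      have "inverse (real (Suc (r k))) \<le> inverse (real (Suc k))"
        using seq_suble[OF r(1), of k] by (simp add: le_imp_inverse_le)
      then show ?thesis using Ls(3)[OF \<sigma>(1), of "r k"] by linarith
    qed
    ultimately have "\<bar>det (column_submatrix l \<sigma>)\<bar> \<le> 0"
      using LIMSEQ_le[OF _ LIMSEQ_inverse_real_of_nat] by blast
    with \<sigma>(2) show False by simp
  qed
  then show thesis using that by blast
qed

definition int_box :: "real \<Rightarrow> 'd set \<Rightarrow> (real^'d) set" where
  "int_box B J = {v. (\<forall>i. v $ i \<in> \<int> \<and> \<bar>v $ i\<bar> \<le> B) \<and> (\<forall>i. i \<notin> J \<longrightarrow> v $ i = 0)}"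

lemma finite_card_int_box:
  fixes J :: "'d::finite set"
  assumes "B \<ge> 0"
  shows "finite (int_box B J)" and "real (card (int_box B J)) \<le> (2*B + 1) ^ card J"
proof -
  define f where "f v = restrict (\<lambda>i. \<lfloor>v $ i\<rfloor>) J" for v :: "real^'d"
  define T where "T = PiE J (\<lambda>_. {-\<lfloor>B\<rfloor>..\<lfloor>B\<rfloor>})"
  have fin_T: "finite T" unfolding T_def by (simp add: finite_PiE)
  have into: "f ` int_box B J \<subseteq> T"
  proof -
    have "\<lfloor>v $ i\<rfloor> \<in> {-\<lfloor>B\<rfloor>..\<lfloor>B\<rfloor>}" if "v \<in> int_box B J" for v i
    proof -
      from that have "v $ i \<in> \<int>" "\<bar>v $ i\<bar> \<le> B" unfolding int_box_def by auto
      then obtain k where k: "v $ i = of_int k" "\<bar>of_int k\<bar> \<le> B" by (auto elim: Ints_cases)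
      then have "k \<le> \<lfloor>B\<rfloor>" "-k \<le> \<lfloor>B\<rfloor>" by (simp_all add: le_floor_iff abs_le_iff)
      then show ?thesis using k(1) by simp
    qed
    then show ?thesis unfolding T_def f_def by auto
  qed
  have inj: "inj_on f (int_box B J)"
  proof (rule inj_onI)
    fix v w assume vw: "v \<in> int_box B J" "w \<in> int_box B J" "f v = f w"
    have "v $ i = w $ i" for i
    proof (cases "i \<in> J")
      case True
      then have "\<lfloor>v $ i\<rfloor> = \<lfloor>w $ i\<rfloor>" using fun_cong[OF vw(3), of i] unfolding f_def by simp
      moreover have "v $ i \<in> \<int>" "w $ i \<in> \<int>" using vw unfolding int_box_def by auto
      ultimately show ?thesis by (metis of_int_floor)
    next
      case False then show ?thesis using vw unfolding int_box_def by auto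
    qed
    then show "v = w" by (simp add: vec_eq_iff)
  qed
  show "finite (int_box B J)" using inj_on_finite[OF inj into fin_T] .
  have "card (int_box B J) \<le> card T" using card_inj_on_le[OF inj into fin_T] .
  also have "card T = nat (2*\<lfloor>B\<rfloor> + 1) ^ card J"
    unfolding T_def by (simp add: card_PiE)
  finally have "real (card (int_box B J)) \<le> real (nat (2*\<lfloor>B\<rfloor> + 1)) ^ card J"
    by (metis of_nat_le_iff of_nat_power)
  also have "\<dots> \<le> (2*B + 1) ^ card J"
    using assms of_int_floor_le[of B] by (intro power_mono) auto
  finally show "real (card (int_box B J)) \<le> (2*B + 1) ^ card J" .
qed

lemma card_le_card_image_mult_fibre_bound:
  assumes "finite S" "finite A" "f ` S \<subseteq> A" "\<And>a. a \<in> f ` S \<Longrightarrow> card {x\<in>S. f x = a} \<le> k"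
  shows "card S \<le> card A * k"
proof -
  have "S = (\<Union>a\<in>f ` S. {x\<in>S. f x = a})" by blast
  then have "card S \<le> (\<Sum>a\<in>f ` S. card {x\<in>S. f x = a})"
    by (metis assms(1) card_UN_le finite_imageI)
  also have "\<dots> \<le> card (f ` S) * k"
    using sum_bounded_above[of "f ` S" "\<lambda>a. card {x\<in>S. f x = a}" k] assms(4) by simp
  also have "\<dots> \<le> card A * k" by (simp add: assms(2,3) card_mono)
  finally show ?thesis .
qed

lemma card_le_of_differences:
  fixes T :: "'a::ab_group_add set"
  assumes "finite B" and "\<And>x y. x \<in> T \<Longrightarrow> y \<in> T \<Longrightarrow> x - y \<in> B"
  shows "card T \<le> card B"
proof (cases "T = {}")
  case False
  then obtain x0 where "x0 \<in> T" by blast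
  have "T \<subseteq> (\<lambda>z. x0 + z) ` B"
  proof
    fix x assume "x \<in> T"
    then have "x - x0 \<in> B" using assms(2) \<open>x0 \<in> T\<close> by blast
    then show "x \<in> (\<lambda>z. x0 + z) ` B" by (rule rev_image_eqI) simp
  qed
  then have "card T \<le> card ((\<lambda>z. x0 + z) ` B)" by (simp add: assms(1) card_mono)
  also have "\<dots> \<le> card B" by (rule card_image_le[OF assms(1)])
  finally show ?thesis .
qed simp

definition small_lattice_points :: "real^'d^'m \<Rightarrow> real \<Rightarrow> real \<Rightarrow> (real^'d) set" where
  "small_lattice_points L N \<epsilon> = {n \<in> int_box N UNIV. \<forall>i. \<bar>(L *v n) $ i\<bar> \<le> \<epsilon>}"

lemma finite_small_lattice_points: "N \<ge> 0 \<Longrightarrow> finite (small_lattice_points L N \<epsilon>)"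
  unfolding small_lattice_points_def by (rule finite_subset[OF _ finite_card_int_box(1)]) auto

lemma card_small_lattice_points_le:
  fixes L :: "real^'d^'m" and \<sigma> :: "'m \<Rightarrow> 'd"
  assumes "inj \<sigma>" "R \<ge> 0" "N \<ge> 0"
    and small_diff: "\<And>z. (\<forall>i. z $ i \<in> \<int>) \<Longrightarrow> (\<forall>i. i \<notin> range \<sigma> \<longrightarrow> z $ i = 0) \<Longrightarrow>
                (\<forall>i. \<bar>(L *v z) $ i\<bar> \<le> 2*\<epsilon>) \<Longrightarrow> z \<in> int_box R (range \<sigma>)"
  shows "real (card (small_lattice_points L N \<epsilon>))
           \<le> (2*N + 1) ^ (CARD('d) - CARD('m)) * (2*R + 1) ^ CARD('m)"
proof -
  let ?S = "small_lattice_points L N \<epsilon>"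
  define \<pi> where "\<pi> n = (\<chi> i. if i \<in> range \<sigma> then 0 else n $ i)" for n :: "real^'d"
  have fibre: "card {n\<in>?S. \<pi> n = p} \<le> card (int_box R (range \<sigma>))" for p
  proof (rule card_le_of_differences[OF finite_card_int_box(1)[OF assms(2)]])
    fix n n' assume "n \<in> {n\<in>?S. \<pi> n = p}" "n' \<in> {n\<in>?S. \<pi> n = p}"
    then have S: "n \<in> ?S" "n' \<in> ?S" and "\<pi> n = \<pi> n'" by auto
    show "n - n' \<in> int_box R (range \<sigma>)"
    proof (rule small_diff)
      show "\<forall>i. (n - n') $ i \<in> \<int>"
        using S by (auto simp: small_lattice_points_def int_box_def)
      show "\<forall>i. i \<notin> range \<sigma> \<longrightarrow> (n - n') $ i = 0"
      proof (intro allI impI)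
        fix i assume "i \<notin> range \<sigma>"
        then show "(n - n') $ i = 0"
          using arg_cong[where f="\<lambda>v. v $ i", OF \<open>\<pi> n = \<pi> n'\<close>] by (simp add: \<pi>_def)
      qed
      show "\<forall>i. \<bar>(L *v (n - n')) $ i\<bar> \<le> 2*\<epsilon>"
      proof
        fix i
        have "\<bar>(L *v n) $ i\<bar> \<le> \<epsilon>" "\<bar>(L *v n') $ i\<bar> \<le> \<epsilon>"
          using S by (auto simp: small_lattice_points_def)
        moreover have "\<bar>(L *v (n - n')) $ i\<bar> \<le> \<bar>(L *v n) $ i\<bar> + \<bar>(L *v n') $ i\<bar>"
          by (simp add: matrix_vector_mult_diff_distrib abs_triangle_ineq4)
        ultimately show "\<bar>(L *v (n - n')) $ i\<bar> \<le> 2*\<epsilon>" by linarith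
      qed
    qed
  qed
  have "\<pi> ` ?S \<subseteq> int_box N (- range \<sigma>)"
    using assms(3) by (auto simp: small_lattice_points_def int_box_def \<pi>_def)
  then have "card ?S \<le> card (int_box N (- range \<sigma>)) * card (int_box R (range \<sigma>))"
    using finite_small_lattice_points[OF assms(3)] finite_card_int_box(1)[OF assms(3)] fibre
    by (intro card_le_card_image_mult_fibre_bound) auto
  then have "real (card ?S) \<le> real (card (int_box N (- range \<sigma>))) * real (card (int_box R (range \<sigma>)))"
    by (metis of_nat_le_iff of_nat_mult)
  also have "\<dots> \<le> (2*N + 1) ^ card (- range \<sigma>) * (2*R + 1) ^ card (range \<sigma>)"
    using assms(2,3) by (intro mult_mono finite_card_int_box(2)) auto
  also have "card (range \<sigma>) = CARD('m)" using assms(1) by (simp add: card_image)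
  also have "card (- range \<sigma>) = CARD('d) - CARD('m)"
    using \<open>card (range \<sigma>) = CARD('m)\<close> by (simp add: Compl_eq_Diff_UNIV card_Diff_subset)
  finally show ?thesis .
qed

lemma lattice_sum_le_card_mult_sup:
  fixes L :: "real^'d^'m" and F :: "real^'d \<Rightarrow> real" and G :: "real^'m \<Rightarrow> real"
  assumes "N \<ge> 0"
    and F: "\<And>x. 0 \<le> F x \<and> F x \<le> 1" "\<And>x i. F x \<noteq> 0 \<Longrightarrow> \<bar>x $ i\<bar> \<le> N"
    and G: "bdd_above (range (\<lambda>y. \<bar>G y\<bar>))" "\<And>y i. G y \<noteq> 0 \<Longrightarrow> \<bar>y $ i\<bar> \<le> \<epsilon>"
  shows "(\<Sum>\<^sub>\<infinity>n\<in>lattice. F n * G (L *v n))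
           \<le> real (card (small_lattice_points L N \<epsilon>)) * (SUP y. \<bar>G y\<bar>)"
proof -
  let ?S = "small_lattice_points L N \<epsilon>"
  have "(\<Sum>\<^sub>\<infinity>n\<in>lattice. F n * G (L *v n)) = (\<Sum>\<^sub>\<infinity>n\<in>?S. F n * G (L *v n))"
  proof (rule infsum_cong_neutral)
    show "F x * G (L *v x) = 0" if "x \<in> ?S - lattice" for x
      using that unfolding small_lattice_points_def int_box_def lattice_def by auto
    show "F x * G (L *v x) = 0" if x: "x \<in> lattice - ?S" for x
    proof (rule ccontr)
      assume "F x * G (L *v x) \<noteq> 0"
      then have "x \<in> ?S"
        using x F(2)[of x] G(2)[of "L *v x"]
        unfolding small_lattice_points_def int_box_def lattice_def by auto
      with x show False by blast
    qed
  qed simp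
  also have "\<dots> = (\<Sum>n\<in>?S. F n * G (L *v n))"
    by (rule infsum_finite[OF finite_small_lattice_points[OF assms(1)]])
  also have "\<dots> \<le> (\<Sum>n\<in>?S. SUP y. \<bar>G y\<bar>)"
  proof (rule sum_mono)
    fix n
    have "F n * G (L *v n) \<le> F n * \<bar>G (L *v n)\<bar>"
      using F(1)[of n] by (intro mult_left_mono) auto
    also have "\<dots> \<le> \<bar>G (L *v n)\<bar>"
      using F(1)[of n] by (simp add: mult_left_le_one_le)
    also have "\<dots> \<le> (SUP y. \<bar>G y\<bar>)" using cSUP_upper[OF _ G(1)] by simp
    finally show "F n * G (L *v n) \<le> (SUP y. \<bar>G y\<bar>)" .
  qed
  finally show ?thesis by simp
qed

lemma powr_neg_mult_power_le:
  fixes N :: real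
  assumes "N \<ge> 1"
  shows "N powr (- real D) * (2*N + 1) ^ D \<le> 3 ^ D"
proof -
  have "(2*N + 1) ^ D \<le> (3*N) ^ D" using assms by (intro power_mono) auto
  then have "(2*N + 1) ^ D \<le> 3 ^ D * N ^ D" by (simp add: power_mult_distrib)
  moreover have "N powr (- real D) = inverse (N ^ D)"
    using assms by (simp add: powr_minus powr_realpow)
  ultimately have "N powr (- real D) * (2*N + 1) ^ D \<le> inverse (N ^ D) * (3 ^ D * N ^ D)"
    using assms by (auto intro: mult_left_mono)
  also have "\<dots> = 3 ^ D" using assms by simp
  finally show ?thesis .
qed


lemma T_form_le_by_nonsingular_minor:
  fixes L :: "real^'d^'m" and \<sigma> :: "'m \<Rightarrow> 'd"
    and F :: "real^'d \<Rightarrow> real" and G :: "real^'m \<Rightarrow> real" and C \<epsilon> \<delta> :: real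
  defines "R \<equiv> fact CARD('m) * max C (2*\<epsilon>) ^ CARD('m) / \<delta>"
  assumes dim: "CARD('m) \<le> CARD('d)" and "N \<ge> 1"
    and \<sigma>: "inj \<sigma>" "\<delta> > 0" "\<delta> \<le> \<bar>det (column_submatrix L \<sigma>)\<bar>"
    and "mat_sup_norm L \<le> C"
    and F: "\<And>x. 0 \<le> F x \<and> F x \<le> 1" "\<And>x i. F x \<noteq> 0 \<Longrightarrow> \<bar>x $ i\<bar> \<le> real N"
    and G: "\<And>y. \<bar>G y\<bar> \<le> 1" "\<And>y i. G y \<noteq> 0 \<Longrightarrow> \<bar>y $ i\<bar> \<le> \<epsilon>"
  shows "T_form L F G N \<le> 3 ^ (CARD('d) - CARD('m)) * (2*R + 1) ^ CARD('m) * (SUP y. \<bar>G y\<bar>)"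
proof -
  define D where "D = CARD('d) - CARD('m)"
  have "C \<ge> 0" using mat_sup_norm_nonneg[of L] \<open>mat_sup_norm L \<le> C\<close> by linarith
  then have "R \<ge> 0" unfolding R_def using \<open>\<delta> > 0\<close> by simp
  have exponent: "- (real CARD('d) - real CARD('m)) = - real D"
    unfolding D_def using dim by (simp add: of_nat_diff)
  have "z \<in> int_box R (range \<sigma>)"
    if z: "\<forall>i. z $ i \<in> \<int>" "\<forall>i. i \<notin> range \<sigma> \<longrightarrow> z $ i = 0" "\<forall>i. \<bar>(L *v z) $ i\<bar> \<le> 2*\<epsilon>" for z
  proof -
    have "\<bar>z $ k\<bar> \<le> R" for k
      unfolding R_def using z \<open>mat_sup_norm L \<le> C\<close>
      by (intro abs_coord_le_by_nonsingular_minor[OF \<sigma>])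
        (auto intro: order_trans[OF abs_entry_le_mat_sup_norm])
    then show ?thesis using z unfolding int_box_def by auto
  qed
  then have count: "real (card (small_lattice_points L (real N) \<epsilon>))
      \<le> (2*real N + 1) ^ D * (2*R + 1) ^ CARD('m)"
    unfolding D_def by (intro card_small_lattice_points_le[OF \<sigma>(1) \<open>R \<ge> 0\<close>]) auto
  have bdd: "bdd_above (range (\<lambda>y. \<bar>G y\<bar>))"
    using G(1) by (intro bdd_aboveI2[where M=1]) auto
  have sup_nonneg: "0 \<le> (SUP y. \<bar>G y\<bar>)"
    using cSUP_upper[OF UNIV_I bdd, of 0] abs_ge_zero order_trans by blast
  have "T_form L F G N
      \<le> real N powr (- real D) * (real (card (small_lattice_points L (real N) \<epsilon>)) * (SUP y. \<bar>G y\<bar>))"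
    unfolding T_form_def exponent using F G bdd
    by (intro mult_left_mono lattice_sum_le_card_mult_sup) auto
  also have "\<dots> \<le> real N powr (- real D) * ((2*real N + 1) ^ D * (2*R + 1) ^ CARD('m) * (SUP y. \<bar>G y\<bar>))"
    using count sup_nonneg by (intro mult_left_mono mult_right_mono) auto
  also have "\<dots> \<le> 3 ^ D * (2*R + 1) ^ CARD('m) * (SUP y. \<bar>G y\<bar>)"
    using powr_neg_mult_power_le[of "real N" D] \<open>N \<ge> 1\<close> \<open>R \<ge> 0\<close> sup_nonneg
    by (simp add: mult.assoc[symmetric] mult_right_mono)
  finally show ?thesis unfolding D_def .
qed

theorem lemma3p2:
  fixes c C \<epsilon> :: real
  assumes "CARD('d) \<ge> CARD('m) + 1"
    and "c > 0" and "C > 0" and "\<epsilon> > 0"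
  shows "\<exists>K::real. \<forall>(N::nat) (L::real^'d^'m) (F::real^'d \<Rightarrow> real) (G::real^'m \<Rightarrow> real).
     N \<ge> 1 \<and> surj (\<lambda>x. L *v x) \<and> mat_sup_norm L \<le> C \<and> dist_lowrank L \<ge> c
     \<and> (\<forall>x. 0 \<le> F x \<and> F x \<le> 1) \<and> (\<forall>x. F x \<noteq> 0 \<longrightarrow> (\<forall>i. \<bar>x $ i\<bar> \<le> real N))
     \<and> (\<forall>y. 0 \<le> G y \<and> G y \<le> 1) \<and> (\<forall>y. G y \<noteq> 0 \<longrightarrow> (\<forall>i. \<bar>y $ i\<bar> \<le> \<epsilon>))
     \<longrightarrow> T_form L F G N \<le> K * (SUP y. \<bar>G y\<bar>)"
proof -
  obtain \<delta> where "\<delta> > 0" and minor: "\<And>L::real^'d^'m. mat_sup_norm L \<le> C \<Longrightarrow> c \<le> dist_lowrank L \<Longrightarrow>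
      \<exists>\<sigma>. inj \<sigma> \<and> \<delta> \<le> \<bar>det (column_submatrix L \<sigma>)\<bar>"
    using uniform_nonsingular_minor[OF \<open>c > 0\<close>] by blast
  let ?R = "fact CARD('m) * max C (2*\<epsilon>) ^ CARD('m) / \<delta>"
  show ?thesis
  proof (intro exI[of _ "3 ^ (CARD('d) - CARD('m)) * (2*?R + 1) ^ CARD('m)"] allI impI, elim conjE)
    fix N :: nat and L :: "real^'d^'m" and F :: "real^'d \<Rightarrow> real" and G :: "real^'m \<Rightarrow> real"
    assume "N \<ge> 1" "surj (\<lambda>x. L *v x)" "mat_sup_norm L \<le> C" "dist_lowrank L \<ge> c"
      and F: "\<forall>x. 0 \<le> F x \<and> F x \<le> 1" "\<forall>x. F x \<noteq> 0 \<longrightarrow> (\<forall>i. \<bar>x $ i\<bar> \<le> real N)"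
      and G: "\<forall>y. 0 \<le> G y \<and> G y \<le> 1" "\<forall>y. G y \<noteq> 0 \<longrightarrow> (\<forall>i. \<bar>y $ i\<bar> \<le> \<epsilon>)"
    then obtain \<sigma> where "inj \<sigma>" "\<delta> \<le> \<bar>det (column_submatrix L \<sigma>)\<bar>"
      using minor by blast
    then show "T_form L F G N \<le> 3 ^ (CARD('d) - CARD('m)) * (2*?R + 1) ^ CARD('m) * (SUP y. \<bar>G y\<bar>)"
      using assms(1) \<open>N \<ge> 1\<close> \<open>\<delta> > 0\<close> \<open>mat_sup_norm L \<le> C\<close> F G
      by (intro T_form_le_by_nonsingular_minor) auto
  qed
qed

end
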